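(* No infinite betweenness algebra is a MIA; that is, if $\langle A,f,g\rangle$ is a betweenness algebra with $A$ infinite, then $Q_f\neq S_g$.
   Context: A PS-algebra is $\langle A,f,g\rangle$ where $A$ is a Boolean algebra with at least two elements (operations $+,\cdot,-,0,1$) and $f,g\colon A^2\to A$ satisfy: $f(x,y)=0$ whenever $x=0$ or $y=0$; $f$ is additive in each argument; $g(x,y)=1$ whenever $x=0$ or $y=0$; $g$ is co-additive in each argument ($g(x+x',y)=g(x,y)\cdot g(x',y)$, $g(x,y+y')=g(x,y)\cdot g(x,y')$). A betweenness algebra is a PS-algebra satisfying for all $x,y,z$: (ABT0) $x\leq f(x,x)$; (ABT1$_f$) $f(x,y)\leq f(y,x)$; (ABT1$_g$) $g(x,y)\leq g(y,x)$; (ABT2) $y\cdot f(x,z)\leq f(x\cdot f(x,y),z)$; (ABT3) $f(x,g(x,-y)\cdot y)\leq y$; (wMIA) if $x\neq0$ and $y\neq0$ then $g(x,y)\leq f(x,y)$. On the set of ultrafilters of $A$ define $Q_f(\mathcal U_1,\mathcal U_2,\mathcal U_3)\iff f[\mathcal U_1\times\mathcal U_3]\subseteq\mathcal U_2$ and $S_g(\mathcal U_1,\mathcal U_2,\mathcal U_3)\iff g[\mathcal U_1\times\mathcal U_3]\cap\mathcal U_2\neq\emptyset$. A PS-algebra is a MIA (mixed algebra) if $Q_f=S_g$. *)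

theory Defs
  imports Main
begin

text \<open>Boolean algebras are modelled by the type class boolean_algebra:
  + is sup, \<cdot> is inf, - is uminus, 0 is bot, 1 is top.\<close>

definition ps_algebra :: "('a::boolean_algebra \<Rightarrow> 'a \<Rightarrow> 'a) \<Rightarrow> ('a \<Rightarrow> 'a \<Rightarrow> 'a) \<Rightarrow> bool" where
  "ps_algebra f g \<longleftrightarrow>
     (bot::'a) \<noteq> top \<and>
     (\<forall>x y. (x = bot \<or> y = bot) \<longrightarrow> f x y = bot) \<and>
     (\<forall>x x' y. f (sup x x') y = sup (f x y) (f x' y)) \<and>
     (\<forall>x y y'. f x (sup y y') = sup (f x y) (f x y')) \<and>
     (\<forall>x y. (x = bot \<or> y = bot) \<longrightarrow> g x y = top) \<and>
     (\<forall>x x' y. g (sup x x') y = inf (g x y) (g x' y)) \<and>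
     (\<forall>x y y'. g x (sup y y') = inf (g x y) (g x y'))"

definition betweenness_algebra :: "('a::boolean_algebra \<Rightarrow> 'a \<Rightarrow> 'a) \<Rightarrow> ('a \<Rightarrow> 'a \<Rightarrow> 'a) \<Rightarrow> bool" where
  "betweenness_algebra f g \<longleftrightarrow>
     ps_algebra f g \<and>
     (\<forall>x. x \<le> f x x) \<and>
     (\<forall>x y. f x y \<le> f y x) \<and>
     (\<forall>x y. g x y \<le> g y x) \<and>
     (\<forall>x y z. inf y (f x z) \<le> f (inf x (f x y)) z) \<and>
     (\<forall>x y. f x (inf (g x (- y)) y) \<le> y) \<and>
     (\<forall>x y. x \<noteq> bot \<and> y \<noteq> bot \<longrightarrow> g x y \<le> f x y)"

definition ultrafilter_ba :: "'a::boolean_algebra set \<Rightarrow> bool" where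
  "ultrafilter_ba U \<longleftrightarrow>
     top \<in> U \<and> bot \<notin> U \<and>
     (\<forall>x y. x \<in> U \<and> y \<in> U \<longrightarrow> inf x y \<in> U) \<and>
     (\<forall>x y. x \<in> U \<and> x \<le> y \<longrightarrow> y \<in> U) \<and>
     (\<forall>x. x \<in> U \<or> - x \<in> U)"

definition Q_rel :: "('a::boolean_algebra \<Rightarrow> 'a \<Rightarrow> 'a) \<Rightarrow> 'a set \<Rightarrow> 'a set \<Rightarrow> 'a set \<Rightarrow> bool" where
  "Q_rel f U1 U2 U3 \<longleftrightarrow> (\<forall>x\<in>U1. \<forall>z\<in>U3. f x z \<in> U2)"

definition S_rel :: "('a::boolean_algebra \<Rightarrow> 'a \<Rightarrow> 'a) \<Rightarrow> 'a set \<Rightarrow> 'a set \<Rightarrow> 'a set \<Rightarrow> bool" where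
  "S_rel g U1 U2 U3 \<longleftrightarrow> (\<exists>x\<in>U1. \<exists>z\<in>U3. g x z \<in> U2)"

definition mia :: "('a::boolean_algebra \<Rightarrow> 'a \<Rightarrow> 'a) \<Rightarrow> ('a \<Rightarrow> 'a \<Rightarrow> 'a) \<Rightarrow> bool" where
  "mia f g \<longleftrightarrow> ps_algebra f g \<and>
     (\<forall>U1 U2 U3. ultrafilter_ba U1 \<and> ultrafilter_ba U2 \<and> ultrafilter_ba U3 \<longrightarrow>
        (Q_rel f U1 U2 U3 \<longleftrightarrow> S_rel g U1 U2 U3))"

end

theory Submission
  imports Defs
begin

text \<open>In a MIA, ABT0 makes Q_f(U,U,U) hold for every ultrafilter U, hence also S_g(U,U,U):
  there are x, z \<in> U with g x z \<in> U. The element w = x \<cdot> z \<cdot> g x z of U is then an atom.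
  Otherwise w splits into disjoint nonzero v and u, both below w, so that v \<le> g v u and
  u \<le> g v v by antitonicity of g; for ultrafilters V \<ni> v and W \<ni> u this gives S_g(V,W,V),
  hence Q_f(V,W,V), and ABT3 applied to y = -u forces -u \<in> W.
  Thus every ultrafilter contains an atom. In an infinite Boolean algebra no finite set of
  atoms has join 1, so the complements of the atoms generate a proper filter, and an
  ultrafilter extending it contains no atom.\<close>

definition proper_filter :: "'a::boolean_algebra set \<Rightarrow> bool" where
  "proper_filter F \<longleftrightarrow> top \<in> F \<and> bot \<notin> F \<and>
     (\<forall>x y. x \<in> F \<and> y \<in> F \<longrightarrow> inf x y \<in> F) \<and>
     (\<forall>x y. x \<in> F \<and> x \<le> y \<longrightarrow> y \<in> F)"

definition atom :: "'a::boolean_algebra \<Rightarrow> bool" where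
  "atom a \<longleftrightarrow> a \<noteq> bot \<and> (\<forall>b. b \<le> a \<longrightarrow> b = bot \<or> b = a)"

lemma ultrafilter_ba_iff: "ultrafilter_ba U \<longleftrightarrow> proper_filter U \<and> (\<forall>x. x \<in> U \<or> - x \<in> U)"
  unfolding ultrafilter_ba_def proper_filter_def by blast

lemma ultrafilter_baD:
  assumes "ultrafilter_ba U"
  shows ultrafilter_ba_bot: "bot \<notin> U"
    and ultrafilter_ba_inf: "x \<in> U \<Longrightarrow> y \<in> U \<Longrightarrow> inf x y \<in> U"
    and ultrafilter_ba_mono: "x \<in> U \<Longrightarrow> x \<le> y \<Longrightarrow> y \<in> U"
  using assms unfolding ultrafilter_ba_def by blast+

lemma ultrafilter_ba_not_compl:
  assumes "ultrafilter_ba U" "x \<in> U" shows "- x \<notin> U"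
  by (metis assms inf_compl_bot ultrafilter_ba_bot ultrafilter_ba_inf)

lemma maximal_proper_filter_imp_ultrafilter:
  assumes F: "proper_filter F"
    and maximal: "\<And>G. proper_filter G \<Longrightarrow> F \<subseteq> G \<Longrightarrow> G = F"
  shows "ultrafilter_ba F"
  unfolding ultrafilter_ba_iff
proof (intro conjI allI F)
  fix x
  show "x \<in> F \<or> - x \<in> F"
  proof (rule ccontr)
    assume neither: "\<not> (x \<in> F \<or> - x \<in> F)"
    define G where "G = {y. \<exists>m\<in>F. inf m x \<le> y}"
    have "bot \<notin> G"
    proof
      assume "bot \<in> G"
      then obtain m where "m \<in> F" "inf m x = bot"
        unfolding G_def using bot_unique by blast
      then have "m \<in> F" "m \<le> - x" by (simp_all add: inf_shunt)
      with F neither show False unfolding proper_filter_def by blast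
    qed
    moreover have "inf a b \<in> G" if "a \<in> G" "b \<in> G" for a b
    proof -
      from that obtain m m' where "m \<in> F" "inf m x \<le> a" "m' \<in> F" "inf m' x \<le> b"
        unfolding G_def by blast
      moreover from this F have "inf m m' \<in> F" unfolding proper_filter_def by blast
      moreover have "inf (inf m m') x \<le> inf (inf m x) (inf m' x)"
        by (simp add: inf.coboundedI1 inf.coboundedI2)
      ultimately show ?thesis
        unfolding G_def by (blast intro: order_trans inf_mono)
    qed
    ultimately have "proper_filter G"
      using F unfolding proper_filter_def G_def by (auto intro: order_trans)
    moreover have "F \<subseteq> G" "x \<in> G"
      using F unfolding G_def proper_filter_def by (auto intro: le_infI1)
    ultimately show False using maximal neither by blast
  qed
qed

lemma proper_filter_Union_chain:
  assumes "C \<noteq> {}" "subset.chain {G. proper_filter G} C"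
  shows "proper_filter (\<Union>C)"
proof -
  have filters: "\<And>G. G \<in> C \<Longrightarrow> proper_filter G"
    and comparable: "\<And>G H. G \<in> C \<Longrightarrow> H \<in> C \<Longrightarrow> G \<subseteq> H \<or> H \<subseteq> G"
    using assms(2) unfolding subset_chain_def by blast+
  have "inf x y \<in> \<Union>C" if "x \<in> \<Union>C" "y \<in> \<Union>C" for x y
  proof -
    from that obtain G H where "G \<in> C" "H \<in> C" "x \<in> G" "y \<in> H" by blast
    with comparable[of G H] have "x \<in> G \<and> y \<in> G \<and> G \<in> C \<or> x \<in> H \<and> y \<in> H \<and> H \<in> C"
      by blast
    then show ?thesis using filters unfolding proper_filter_def by blast
  qed
  with assms(1) filters show ?thesis unfolding proper_filter_def by blast
qed

lemma proper_filter_imp_ultrafilter_superset: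
  assumes "proper_filter F"
  obtains U where "ultrafilter_ba U" "F \<subseteq> U"
proof -
  let ?A = "{G. proper_filter G \<and> F \<subseteq> G}"
  have "\<exists>M\<in>?A. \<forall>G\<in>?A. M \<subseteq> G \<longrightarrow> G = M"
  proof (rule subset_Zorn_nonempty)
    show "?A \<noteq> {}" using assms by blast
  next
    fix C assume C: "C \<noteq> {}" "subset.chain ?A C"
    then have "proper_filter (\<Union>C)"
      by (intro proper_filter_Union_chain) (auto simp: subset_chain_def)
    moreover have "F \<subseteq> \<Union>C" using C unfolding subset_chain_def by blast
    ultimately show "\<Union>C \<in> ?A" by blast
  qed
  then obtain M where M: "M \<in> ?A" and maximal: "\<forall>G\<in>?A. M \<subseteq> G \<longrightarrow> G = M"
    by blast
  have "ultrafilter_ba M"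
  proof (rule maximal_proper_filter_imp_ultrafilter)
    show "proper_filter M" using M by simp
  next
    fix G assume "proper_filter G" "M \<subseteq> G"
    with M maximal show "G = M" by auto
  qed
  with M that show thesis by simp
qed

lemma ultrafilter_ba_exists:
  assumes "x \<noteq> bot"
  obtains U where "ultrafilter_ba U" "x \<in> U"
proof -
  have "proper_filter {y. x \<le> y}"
    using assms unfolding proper_filter_def by (auto simp: bot_unique intro: order_trans)
  then show thesis
    using proper_filter_imp_ultrafilter_superset that by blast
qed

lemma atom_disjoint_or_le:
  assumes "atom a" shows "inf a x = bot \<or> a \<le> x"
  using assms unfolding atom_def by (metis inf.cobounded1 inf.absorb_iff1 inf.commute)

lemma finite_UNIV_if_atoms_cover:
  fixes S :: "'a::boolean_algebra set"
  assumes "finite S" and atoms: "\<forall>a\<in>S. atom a"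
    and cover: "\<And>x. \<forall>a\<in>S. inf a x = bot \<Longrightarrow> x = bot"
  shows "finite (UNIV :: 'a set)"
proof -
  have le: "y \<le> y'" if same: "{a\<in>S. a \<le> y} = {a\<in>S. a \<le> y'}" for y y' :: 'a
  proof -
    have "inf a (inf y (- y')) = bot" if "a \<in> S" for a
    proof (rule ccontr)
      assume "inf a (inf y (- y')) \<noteq> bot"
      then have "a \<le> y" "a \<le> - y'"
        using atom_disjoint_or_le atoms \<open>a \<in> S\<close> by (metis le_inf_iff)+
      moreover from \<open>a \<le> y\<close> same \<open>a \<in> S\<close> have "a \<le> y'" by blast
      ultimately show False
        using atoms \<open>a \<in> S\<close> unfolding atom_def by (metis inf_compl_bot le_inf_iff le_bot)
    qed
    then have "inf y (- y') = bot" using cover by blast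
    then show ?thesis by (simp add: inf_shunt)
  qed
  have "inj (\<lambda>y. {a\<in>S. a \<le> y})"
    by (rule injI) (metis le order.antisym)
  then show ?thesis
    by (rule inj_on_finite[where B = "Pow S"]) (use \<open>finite S\<close> in auto)
qed

lemma finite_UNIV_if_ultrafilters_contain_atoms:
  assumes "\<And>U :: 'a::boolean_algebra set. ultrafilter_ba U \<Longrightarrow> \<exists>a\<in>U. atom a"
  shows "finite (UNIV :: 'a set)"
proof (rule ccontr)
  assume infinite: "infinite (UNIV :: 'a set)"
  \<comment> \<open>The filter generated by the complements of the atoms: y lies above a finite meet
    of such complements -a, a \<in> S, i.e. above every x disjoint from all atoms in S.\<close>
  define F :: "'a set" where
    "F = {y. \<exists>S. finite S \<and> (\<forall>a\<in>S. atom a) \<and> (\<forall>x. (\<forall>a\<in>S. inf a x = bot) \<longrightarrow> x \<le> y)}"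
  have "proper_filter F"
    unfolding proper_filter_def
  proof (intro conjI allI impI)
    show "top \<in> F" unfolding F_def by (intro CollectI exI[of _ "{}"]) simp
  next
    show "bot \<notin> F"
    proof
      assume "bot \<in> F"
      then obtain S :: "'a set" where S: "finite S" "\<forall>a\<in>S. atom a"
        and below_bot: "\<forall>x. (\<forall>a\<in>S. inf a x = bot) \<longrightarrow> x \<le> bot"
        unfolding F_def by auto
      have "finite (UNIV :: 'a set)"
        by (rule finite_UNIV_if_atoms_cover[OF S]) (use below_bot in \<open>simp add: bot_unique\<close>)
      with infinite show False by contradiction
    qed
  next
    fix y y' assume "y \<in> F \<and> y' \<in> F"
    then obtain S S' where "finite S" "\<forall>a\<in>S. atom a" "\<forall>x. (\<forall>a\<in>S. inf a x = bot) \<longrightarrow> x \<le> y"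
      "finite S'" "\<forall>a\<in>S'. atom a" "\<forall>x. (\<forall>a\<in>S'. inf a x = bot) \<longrightarrow> x \<le> y'"
      unfolding F_def by auto
    then show "inf y y' \<in> F" unfolding F_def by (intro CollectI exI[of _ "S \<union> S'"]) auto
  next
    fix y y' assume "y \<in> F \<and> y \<le> y'"
    then obtain S :: "'a set" where "finite S" "\<forall>a\<in>S. atom a"
      "\<forall>x. (\<forall>a\<in>S. inf a x = bot) \<longrightarrow> x \<le> y" "y \<le> y'"
      unfolding F_def by auto
    then show "y' \<in> F" unfolding F_def by (intro CollectI exI[of _ S]) (auto intro: order_trans)
  qed
  then obtain U where U: "ultrafilter_ba U" "F \<subseteq> U"
    by (rule proper_filter_imp_ultrafilter_superset)
  with assms obtain a where "a \<in> U" "atom a" by blast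
  moreover have "- a \<in> F"
    unfolding F_def using \<open>atom a\<close>
    by (intro CollectI exI[of _ "{a}"]) (simp add: inf_shunt inf_commute)
  ultimately show False using U ultrafilter_ba_not_compl by blast
qed

lemma ps_algebra_f_mono:
  assumes "ps_algebra f g" "a \<le> a'" "c \<le> c'"
  shows "f a c \<le> f a' c'"
proof -
  have "f a c \<le> f a c'"
    using assms(1) sup_absorb2[OF assms(3)] unfolding ps_algebra_def by (metis sup.cobounded1)
  also have "\<dots> \<le> f a' c'"
    using assms(1) sup_absorb2[OF assms(2)] unfolding ps_algebra_def by (metis sup.cobounded1)
  finally show ?thesis .
qed

lemma ps_algebra_g_antimono:
  assumes "ps_algebra f g" "a \<le> a'" "c \<le> c'"
  shows "g a' c' \<le> g a c"
proof -
  have "g a' c' \<le> g a c'"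
    using assms(1) sup_absorb2[OF assms(2)] unfolding ps_algebra_def by (metis inf.cobounded1)
  also have "\<dots> \<le> g a c"
    using assms(1) sup_absorb2[OF assms(3)] unfolding ps_algebra_def by (metis inf.cobounded1)
  finally show ?thesis .
qed

lemma mia_Q_rel_iff_S_rel:
  assumes "mia f g" "ultrafilter_ba U1" "ultrafilter_ba U2" "ultrafilter_ba U3"
  shows "Q_rel f U1 U2 U3 \<longleftrightarrow> S_rel g U1 U2 U3"
  using assms unfolding mia_def by blast

lemma mia_disjoint_not_le_g:
  fixes f g :: "'a::boolean_algebra \<Rightarrow> 'a \<Rightarrow> 'a"
  assumes mia: "mia f g" and abt3: "\<And>x y. f x (inf (g x (- y)) y) \<le> y"
    and "u \<noteq> bot" "v \<noteq> bot" "inf u v = bot"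
  shows "\<not> (v \<le> g v u \<and> u \<le> g v v)"
proof
  assume le_g: "v \<le> g v u \<and> u \<le> g v v"
  obtain V where V: "ultrafilter_ba V" "v \<in> V" using \<open>v \<noteq> bot\<close> ultrafilter_ba_exists by blast
  obtain W where W: "ultrafilter_ba W" "u \<in> W" using \<open>u \<noteq> bot\<close> ultrafilter_ba_exists by blast
  have "g v v \<in> W" using W le_g ultrafilter_ba_mono by blast
  with V have "S_rel g V W V" unfolding S_rel_def by blast
  with mia V W have Q: "Q_rel f V W V" using mia_Q_rel_iff_S_rel by blast
  have "v \<le> - u" using \<open>inf u v = bot\<close> by (metis inf_commute inf_shunt)
  then have "inf (g v (- (- u))) (- u) \<in> V"
    using V le_g by (simp add: ultrafilter_ba_inf ultrafilter_ba_mono)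
  with Q V have "f v (inf (g v (- (- u))) (- u)) \<in> W" unfolding Q_rel_def by blast
  then have "- u \<in> W" using W abt3 ultrafilter_ba_mono by blast
  with W show False using ultrafilter_ba_not_compl by blast
qed

lemma mia_ultrafilter_contains_atom:
  fixes f g :: "'a::boolean_algebra \<Rightarrow> 'a \<Rightarrow> 'a" and U :: "'a set"
  assumes mia: "mia f g"
    and abt0: "\<And>x. x \<le> f x x" and abt3: "\<And>x y. f x (inf (g x (- y)) y) \<le> y"
    and U: "ultrafilter_ba U"
  shows "\<exists>a\<in>U. atom a"
proof -
  have ps: "ps_algebra f g" using mia unfolding mia_def by blast
  have "Q_rel f U U U" unfolding Q_rel_def
  proof (intro ballI)
    fix x z assume "x \<in> U" "z \<in> U"
    have "inf x z \<le> f (inf x z) (inf x z)" by (rule abt0)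
    also have "\<dots> \<le> f x z" by (rule ps_algebra_f_mono[OF ps]) auto
    finally show "f x z \<in> U"
      using U \<open>x \<in> U\<close> \<open>z \<in> U\<close> ultrafilter_ba_inf ultrafilter_ba_mono by blast
  qed
  with mia U obtain x z where "x \<in> U" "z \<in> U" "g x z \<in> U"
    using mia_Q_rel_iff_S_rel unfolding S_rel_def by blast
  define w where "w = inf (inf x z) (g x z)"
  have "w \<in> U" unfolding w_def using U \<open>x \<in> U\<close> \<open>z \<in> U\<close> \<open>g x z \<in> U\<close> ultrafilter_ba_inf by blast
  have "atom w" unfolding atom_def
  proof (intro conjI allI impI)
    show "w \<noteq> bot" using U \<open>w \<in> U\<close> ultrafilter_ba_bot by blast
  next
    fix v assume "v \<le> w"
    show "v = bot \<or> v = w"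
    proof (rule ccontr)
      assume "\<not> (v = bot \<or> v = w)"
      moreover define u where "u = inf w (- v)"
      ultimately have "v \<noteq> bot" "u \<noteq> bot" "inf u v = bot"
        using \<open>v \<le> w\<close> by (auto simp: inf_shunt inf.assoc dual_order.antisym)
      moreover have "v \<le> g v u" "u \<le> g v v"
        using ps_algebra_g_antimono[OF ps] \<open>v \<le> w\<close> order_trans
        unfolding u_def w_def by (meson le_inf_iff order_refl)+
      ultimately show False using mia_disjoint_not_le_g[OF mia abt3] by blast
    qed
  qed
  with \<open>w \<in> U\<close> show ?thesis by blast
qed

theorem theorem49:
  fixes f g :: "'a::boolean_algebra \<Rightarrow> 'a \<Rightarrow> 'a"
  assumes "betweenness_algebra f g"
    and "infinite (UNIV :: 'a set)"
  shows "\<not> mia f g"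
proof
  assume mia: "mia f g"
  have abt0: "\<And>x. x \<le> f x x" and abt3: "\<And>x y. f x (inf (g x (- y)) y) \<le> y"
    using assms(1) unfolding betweenness_algebra_def by blast+
  have "\<And>U :: 'a set. ultrafilter_ba U \<Longrightarrow> \<exists>a\<in>U. atom a"
    by (rule mia_ultrafilter_contains_atom[OF mia abt0 abt3])
  then have "finite (UNIV :: 'a set)"
    by (rule finite_UNIV_if_ultrafilters_contain_atoms)
  with assms(2) show False by simp
qed

end
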